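(* Let $T$ be a Lie triple system over a field of characteristic zero and $U(T)$ its universal enveloping algebra. For $a,c\in T$ let $D_{a,c}\colon U(T)\to U(T)$, $D_{a,c}(x)=a(cx)-c(ax)$. Then for all $n\ge 1$ and $a,b,c\in T$, $$(c^n,a,b)=\frac{n}{2}\,c^{n-1}[a,c,b]-\frac12\sum_{i=0}^{n-2}\bigl(c^i,\,D_{a,c}(c^{n-1-i}),\,b\bigr).$$ Moreover, for all $n\ge 1$ and $a,c\in T$, $$c^n a=\tfrac12\,(ac^n+c^na)+\sum_{i=0}^{n-2}c^i\,(a,c,c^{n-1-i}).$$
   Context: A Lie triple system (L.t.s.) is a vector space $T$ with a trilinear product $[x,y,z]$ satisfying $[x,x,y]=0$, $[x,y,z]+[y,z,x]+[z,x,y]=0$, and $[a,b,[x,y,z]]=[[a,b,x],y,z]+[x,[a,b,y],z]+[x,y,[a,b,z]]$. For a unital nonassociative algebra $A$ with associator $(x,y,z)=(xy)z-x(yz)$, $\mathrm{LN_{alt}}(A)=\{a\in A : (a,x,y)=-(x,a,y)\ \forall x,y\in A\}$ is an L.t.s. with $[a,b,c]=a(bc)-b(ac)-c(ab)+c(ba)$. The universal enveloping algebra $U(T)$ is the unital algebra with an L.t.s. monomorphism $T\to\mathrm{LN_{alt}}(U(T))$ (elements of $T$ identified with their images) such that $ab=ba$ for $a,b\in T$, universal for L.t.s. homomorphisms into $\mathrm{LN_{alt}}(A)$ with this commutation property. For $c\in T$ the subalgebra generated by $c$ is associative, so $c^n$ is well defined ($c^0=1$). *)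

theory Defs
  imports Main
begin

text \<open>Structures are given by explicit operations on a whole type (carrier = UNIV).\<close>

record ('k, 'a) vspace =
  add  :: "'a \<Rightarrow> 'a \<Rightarrow> 'a"
  zer  :: 'a
  neg  :: "'a \<Rightarrow> 'a"
  smul :: "'k \<Rightarrow> 'a \<Rightarrow> 'a"

record ('k, 'a) alg = "('k, 'a) vspace" +
  mul :: "'a \<Rightarrow> 'a \<Rightarrow> 'a"
  one :: 'a

record ('k, 'a) lts = "('k, 'a) vspace" +
  trip :: "'a \<Rightarrow> 'a \<Rightarrow> 'a \<Rightarrow> 'a"

definition sub :: "('k, 'a, 'b) vspace_scheme \<Rightarrow> 'a \<Rightarrow> 'a \<Rightarrow> 'a" where
  "sub V x y = add V x (neg V y)"

definition vs_axioms :: "('k::field, 'a, 'b) vspace_scheme \<Rightarrow> bool" where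
  "vs_axioms V \<longleftrightarrow>
     (\<forall>x y z. add V (add V x y) z = add V x (add V y z)) \<and>
     (\<forall>x y. add V x y = add V y x) \<and>
     (\<forall>x. add V (zer V) x = x) \<and>
     (\<forall>x. add V (neg V x) x = zer V) \<and>
     (\<forall>r x y. smul V r (add V x y) = add V (smul V r x) (smul V r y)) \<and>
     (\<forall>r s x. smul V (r + s) x = add V (smul V r x) (smul V s x)) \<and>
     (\<forall>r s x. smul V (r * s) x = smul V r (smul V s x)) \<and>
     (\<forall>x. smul V 1 x = x)"

definition linear_map :: "('k, 'a, 'c) vspace_scheme \<Rightarrow> ('k, 'b, 'd) vspace_scheme \<Rightarrow> ('a \<Rightarrow> 'b) \<Rightarrow> bool" where
  "linear_map V W f \<longleftrightarrow>
     (\<forall>x y. f (add V x y) = add W (f x) (f y)) \<and> (\<forall>r x. f (smul V r x) = smul W r (f x))"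

definition unital_algebra :: "('k::field, 'a) alg \<Rightarrow> bool" where
  "unital_algebra A \<longleftrightarrow> vs_axioms A \<and>
     (\<forall>x. linear_map A A (mul A x)) \<and> (\<forall>y. linear_map A A (\<lambda>x. mul A x y)) \<and>
     (\<forall>x. mul A (one A) x = x) \<and> (\<forall>x. mul A x (one A) = x)"

definition assoc :: "('k, 'a) alg \<Rightarrow> 'a \<Rightarrow> 'a \<Rightarrow> 'a \<Rightarrow> 'a" where
  "assoc A x y z = sub A (mul A (mul A x y) z) (mul A x (mul A y z))"

definition LN_alt :: "('k, 'a) alg \<Rightarrow> 'a set" where
  "LN_alt A = {a. \<forall>x y. assoc A a x y = neg A (assoc A x a y)}"

definition alt_trip :: "('k, 'a) alg \<Rightarrow> 'a \<Rightarrow> 'a \<Rightarrow> 'a \<Rightarrow> 'a" where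
  "alt_trip A a b c =
     add A (sub A (sub A (mul A a (mul A b c)) (mul A b (mul A a c))) (mul A c (mul A a b)))
           (mul A c (mul A b a))"

definition lts_axioms :: "('k::field, 'a) lts \<Rightarrow> bool" where
  "lts_axioms T \<longleftrightarrow> vs_axioms T \<and>
     (\<forall>y z. linear_map T T (\<lambda>x. trip T x y z)) \<and>
     (\<forall>x z. linear_map T T (\<lambda>y. trip T x y z)) \<and>
     (\<forall>x y. linear_map T T (\<lambda>z. trip T x y z)) \<and>
     (\<forall>x y. trip T x x y = zer T) \<and>
     (\<forall>x y z. add T (add T (trip T x y z) (trip T y z x)) (trip T z x y) = zer T) \<and>
     (\<forall>a b x y z. trip T a b (trip T x y z) =
        add T (add T (trip T (trip T a b x) y z) (trip T x (trip T a b y) z))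
              (trip T x y (trip T a b z)))"

definition lts_hom_LN :: "('k, 't) lts \<Rightarrow> ('k, 'a) alg \<Rightarrow> ('t \<Rightarrow> 'a) \<Rightarrow> bool" where
  "lts_hom_LN T A f \<longleftrightarrow> linear_map T A f \<and> (\<forall>x. f x \<in> LN_alt A) \<and>
     (\<forall>x y z. f (trip T x y z) = alt_trip A (f x) (f y) (f z))"

definition commuting_image :: "('k, 'a) alg \<Rightarrow> ('t \<Rightarrow> 'a) \<Rightarrow> bool" where
  "commuting_image A f \<longleftrightarrow> (\<forall>x y. mul A (f x) (f y) = mul A (f y) (f x))"

definition unital_alg_hom :: "('k, 'a) alg \<Rightarrow> ('k, 'b) alg \<Rightarrow> ('a \<Rightarrow> 'b) \<Rightarrow> bool" where
  "unital_alg_hom A B h \<longleftrightarrow> linear_map A B h \<and>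
     (\<forall>x y. h (mul A x y) = mul B (h x) (h y)) \<and> h (one A) = one B"

text \<open>U (with embedding \<iota>) is a universal enveloping algebra of T.  The universal property
  is required for all unital algebras whose carrier is the type of U.\<close>
definition is_UEA :: "('k::field, 't) lts \<Rightarrow> ('k, 'u) alg \<Rightarrow> ('t \<Rightarrow> 'u) \<Rightarrow> bool" where
  "is_UEA T U \<iota> \<longleftrightarrow> unital_algebra U \<and> lts_hom_LN T U \<iota> \<and> inj \<iota> \<and> commuting_image U \<iota> \<and>
     (\<forall>(B :: ('k, 'u) alg) \<phi>. unital_algebra B \<and> lts_hom_LN T B \<phi> \<and> commuting_image B \<phi> \<longrightarrow>
        (\<exists>!\<psi>. unital_alg_hom U B \<psi> \<and> \<psi> \<circ> \<iota> = \<phi>))"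

primrec apow :: "('k, 'a) alg \<Rightarrow> 'a \<Rightarrow> nat \<Rightarrow> 'a" where
  "apow A c 0 = one A"
| "apow A c (Suc n) = mul A c (apow A c n)"

definition lsum :: "('k, 'a, 'b) vspace_scheme \<Rightarrow> (nat \<Rightarrow> 'a) \<Rightarrow> nat list \<Rightarrow> 'a" where
  "lsum V f xs = foldr (\<lambda>i acc. add V (f i) acc) xs (zer V)"

definition Dop :: "('k, 'a) alg \<Rightarrow> 'a \<Rightarrow> 'a \<Rightarrow> 'a \<Rightarrow> 'a" where
  "Dop A a c x = sub A (mul A a (mul A c x)) (mul A c (mul A a x))"

end

theory Submission
  imports Defs
begin

text \<open>
  Every n \<in> LN_alt(A) satisfies n(xy) = (nx)y + (xn)y - x(ny).  For c \<in> LN_alt(A) this gives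
  2 c^(k+1) y = 2 c(c^k y) by induction on k, so the powers of c act by iterated left
  multiplication; hence (c^(k+1), y, w) = (c, c^k y, w) + c (c^k, y, w).  If moreover
  a \<in> LN_alt(A) commutes with c, then D = D_(a,c) is a derivation, the sum of the c^i D(c^(m-i))
  telescopes to a c^(m+1) - c^(m+1) a, and (c, c^k a + a c^k, b) = c^k D(b).  With these three
  facts the first identity follows by induction on n.  The second one is the telescoping of
  2 (a, c, y) = c(ay) - a(cy).  In both cases the factor 1/2 comes from halving a doubled
  expression.
\<close>

lemma lsum_Nil [simp]: "lsum V f [] = zer V"
  and lsum_Cons [simp]: "lsum V f (i # is) = add V (f i) (lsum V f is)"
  by (simp_all add: lsum_def)

locale unital_alg =
  fixes U :: "('k::field_char_0, 'u) alg"
  assumes unital_algebra: "unital_algebra U"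
begin

abbreviation umul (infixl "\<cdot>" 70) where "x \<cdot> y \<equiv> mul U x y"
abbreviation uadd (infixl "\<oplus>" 65) where "x \<oplus> y \<equiv> add U x y"
abbreviation usub (infixl "\<ominus>" 65) where "x \<ominus> y \<equiv> sub U x y"

lemma vs_axioms: "vs_axioms U"
  using unital_algebra unfolding unital_algebra_def by auto

sublocale additive: ab_group_add "add U" "zer U" "sub U" "neg U"
  by unfold_locales (use vs_axioms in \<open>auto simp: vs_axioms_def sub_def\<close>)

lemma mul_distrib_left: "x \<cdot> (y \<oplus> z) = x \<cdot> y \<oplus> x \<cdot> z"
  and mul_distrib_right: "(y \<oplus> z) \<cdot> x = y \<cdot> x \<oplus> z \<cdot> x"
  and mul_smul_right: "x \<cdot> smul U r y = smul U r (x \<cdot> y)"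
  and mul_smul_left: "smul U r y \<cdot> x = smul U r (y \<cdot> x)"
  using unital_algebra unfolding unital_algebra_def linear_map_def by blast+

lemma mul_one_left [simp]: "one U \<cdot> x = x"
  and mul_one_right [simp]: "x \<cdot> one U = x"
  using unital_algebra unfolding unital_algebra_def by blast+

lemma smul_right_distrib: "smul U r (x \<oplus> y) = smul U r x \<oplus> smul U r y"
  and smul_left_distrib: "smul U (r + s) x = smul U r x \<oplus> smul U s x"
  and smul_smul: "smul U r (smul U s x) = smul U (r * s) x"
  and smul_one [simp]: "smul U 1 x = x"
  using vs_axioms unfolding vs_axioms_def by simp_all

lemma smul_zero_left [simp]: "smul U 0 x = zer U"
  using smul_left_distrib [of 0 0 x] by simp

lemma smul_minus_one: "smul U (-1) x = neg U x"
  using smul_left_distrib [of 1 "-1" x] additive.minus_unique by simp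

lemma smul_minus_right: "smul U r (neg U x) = neg U (smul U r x)"
  by (simp only: smul_minus_one [symmetric] smul_smul mult.commute)

lemma smul_diff_right: "smul U r (x \<ominus> y) = smul U r x \<ominus> smul U r y"
  by (simp only: sub_def smul_right_distrib smul_minus_right)

lemma mul_zero_right [simp]: "x \<cdot> zer U = zer U"
  using mul_smul_right [of x 0 "zer U"] by simp

lemma mul_zero_left [simp]: "zer U \<cdot> x = zer U"
  using mul_smul_left [of 0 "zer U" x] by simp

lemma mul_neg_right: "x \<cdot> neg U y = neg U (x \<cdot> y)"
  and mul_neg_left: "neg U y \<cdot> x = neg U (y \<cdot> x)"
  by (simp_all only: smul_minus_one [symmetric] mul_smul_right mul_smul_left)

lemma mul_diff_left: "x \<cdot> (y \<ominus> z) = x \<cdot> y \<ominus> x \<cdot> z"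
  and mul_diff_right: "(y \<ominus> z) \<cdot> x = y \<cdot> x \<ominus> z \<cdot> x"
  by (simp_all only: sub_def mul_distrib_left mul_distrib_right mul_neg_left mul_neg_right)

lemmas mul_bilinear =
  mul_distrib_left mul_distrib_right mul_diff_left mul_diff_right mul_neg_left mul_neg_right

lemma smul_half_double: "smul U (1/2) (x \<oplus> x) = x"
proof -
  have "smul U (1/2) (x \<oplus> x) = smul U (1/2 + 1/2) x"
    by (simp only: smul_right_distrib smul_left_distrib)
  then show ?thesis by simp
qed

lemma double_inj: "x \<oplus> x = y \<oplus> y \<Longrightarrow> x = y"
  by (metis smul_half_double)

lemma smul_of_nat_Suc: "smul U (of_nat (Suc n)) x = smul U (of_nat n) x \<oplus> x"
  by (simp add: smul_left_distrib additive.add.commute)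

lemma assoc_add_mid: "assoc U x (y \<oplus> z) w = assoc U x y w \<oplus> assoc U x z w"
  and assoc_diff_mid: "assoc U x (y \<ominus> z) w = assoc U x y w \<ominus> assoc U x z w"
  unfolding assoc_def by (simp_all add: mul_bilinear algebra_simps)

lemma assoc_zero_mid: "assoc U x (zer U) w = zer U"
  and assoc_one_left: "assoc U (one U) y w = zer U"
  unfolding assoc_def by simp_all

lemma LN_alt_mul_mul:
  assumes "n \<in> LN_alt U"
  shows "n \<cdot> (x \<cdot> y) = (n \<cdot> x) \<cdot> y \<oplus> (x \<cdot> n) \<cdot> y \<ominus> x \<cdot> (n \<cdot> y)"
proof -
  have "assoc U n x y = neg U (assoc U x n y)"
    using assms unfolding LN_alt_def by blast
  then show ?thesis
    unfolding assoc_def by (simp add: algebra_simps)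
qed

lemma alt_trip_commuting:
  assumes "a \<cdot> c = c \<cdot> a"
  shows "alt_trip U a c b = Dop U a c b"
  unfolding alt_trip_def Dop_def assms by (simp add: algebra_simps)

lemma lsum_upt_Suc_shift: "lsum U f [0..<Suc m] = f 0 \<oplus> lsum U (\<lambda>i. f (Suc i)) [0..<m]"
proof -
  have "lsum U f (map Suc xs) = lsum U (\<lambda>i. f (Suc i)) xs" for xs
    by (induct xs) simp_all
  moreover have "[0..<Suc m] = 0 # map Suc [0..<m]"
    by (simp add: map_Suc_upt upt_conv_Cons)
  ultimately show ?thesis by simp
qed

lemma lsum_add: "lsum U (\<lambda>i. f i \<oplus> g i) xs = lsum U f xs \<oplus> lsum U g xs"
  by (induct xs) (simp_all add: algebra_simps)

lemma lsum_hom: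
  assumes "\<And>x y. h (x \<oplus> y) = h x \<oplus> h y" and "h (zer U) = zer U"
  shows "h (lsum U f xs) = lsum U (\<lambda>i. h (f i)) xs"
  using assms by (induct xs) simp_all

lemmas lsum_mul_left = lsum_hom [where h = "umul x" for x, OF mul_distrib_left mul_zero_right]

end

declare apow.simps(2) [simp del]

locale LN_alt_element = unital_alg U for U :: "('k::field_char_0, 'u) alg" +
  fixes c :: 'u
  assumes c_LN_alt: "c \<in> LN_alt U"
begin

abbreviation cpow :: "nat \<Rightarrow> 'u" where "cpow k \<equiv> apow U c k"

lemma cpow_Suc: "cpow (Suc k) = c \<cdot> cpow k"
  by (simp add: apow.simps)

text \<open>
  The LN_alt identity for c yields 2 c^(k+1) y = 2 c(c^k y) from the induction hypothesis
  (applied to y, to c y and to 1), and halving gives the step.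
\<close>
lemma cpow_mul_eq_funpow: "cpow k \<cdot> y = (umul c ^^ k) y"
proof (induct k arbitrary: y)
  case 0
  then show ?case by simp
next
  case (Suc k)
  have cpow_mul_c: "cpow k \<cdot> c = cpow (Suc k)"
    using Suc [of c] Suc [of "one U"] by (simp add: funpow_swap1 cpow_Suc)
  have "cpow (Suc k) \<cdot> y \<oplus> cpow (Suc k) \<cdot> y = c \<cdot> (cpow k \<cdot> y) \<oplus> cpow k \<cdot> (c \<cdot> y)"
    using LN_alt_mul_mul [OF c_LN_alt, of "cpow k" y] cpow_mul_c
    by (simp add: cpow_Suc algebra_simps)
  also have "\<dots> = (umul c ^^ Suc k) y \<oplus> (umul c ^^ Suc k) y"
    by (simp add: Suc funpow_swap1)
  finally show ?case by (rule double_inj)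
qed

lemma cpow_Suc_mul: "cpow (Suc k) \<cdot> y = c \<cdot> (cpow k \<cdot> y)"
  by (simp add: cpow_mul_eq_funpow)

lemma assoc_cpow_Suc: "assoc U (cpow (Suc k)) y w = assoc U c (cpow k \<cdot> y) w \<oplus> c \<cdot> assoc U (cpow k) y w"
  unfolding assoc_def cpow_Suc_mul by (simp add: mul_bilinear algebra_simps)

end

locale commuting_element = LN_alt_element U c for U :: "('k::field_char_0, 'u) alg" and c +
  fixes a :: 'u
  assumes commute: "a \<cdot> c = c \<cdot> a"
begin

lemma assoc_double: "assoc U a c y \<oplus> assoc U a c y = c \<cdot> (a \<cdot> y) \<ominus> a \<cdot> (c \<cdot> y)"
proof -
  have "assoc U c a y = neg U (assoc U a c y)"
    using c_LN_alt unfolding LN_alt_def by blast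
  then show ?thesis
    unfolding assoc_def commute by (simp add: algebra_simps)
qed

definition assoc_cpow_sum :: "nat \<Rightarrow> 'u" where
  "assoc_cpow_sum m = lsum U (\<lambda>i. cpow i \<cdot> assoc U a c (cpow (m - i))) [0..<m]"

lemma assoc_cpow_sum_Suc: "assoc_cpow_sum (Suc m) = assoc U a c (cpow (Suc m)) \<oplus> c \<cdot> assoc_cpow_sum m"
  unfolding assoc_cpow_sum_def lsum_upt_Suc_shift by (simp add: cpow_Suc_mul lsum_mul_left)

lemma assoc_cpow_sum_double:
  "assoc_cpow_sum m \<oplus> assoc_cpow_sum m = cpow (Suc m) \<cdot> a \<ominus> a \<cdot> cpow (Suc m)"
proof (induct m)
  case 0
  then show ?case by (simp add: assoc_cpow_sum_def cpow_Suc commute)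
next
  case (Suc m)
  have "assoc_cpow_sum (Suc m) \<oplus> assoc_cpow_sum (Suc m) =
      (assoc U a c (cpow (Suc m)) \<oplus> assoc U a c (cpow (Suc m))) \<oplus> c \<cdot> (assoc_cpow_sum m \<oplus> assoc_cpow_sum m)"
    by (simp add: assoc_cpow_sum_Suc mul_bilinear algebra_simps)
  then show ?case
    unfolding assoc_double Suc
    by (simp add: mul_bilinear cpow_Suc_mul [symmetric] cpow_Suc [symmetric] algebra_simps)
qed

lemma cpow_mul_symmetrized:
  "cpow (Suc m) \<cdot> a = smul U (1/2) (a \<cdot> cpow (Suc m) \<oplus> cpow (Suc m) \<cdot> a) \<oplus> assoc_cpow_sum m"
proof -
  have "assoc_cpow_sum m = smul U (1/2) (cpow (Suc m) \<cdot> a \<ominus> a \<cdot> cpow (Suc m))"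
    using smul_half_double [of "assoc_cpow_sum m"] by (simp only: assoc_cpow_sum_double)
  then have "smul U (1/2) (a \<cdot> cpow (Suc m) \<oplus> cpow (Suc m) \<cdot> a) \<oplus> assoc_cpow_sum m =
      smul U (1/2) (cpow (Suc m) \<cdot> a \<oplus> cpow (Suc m) \<cdot> a)"
    by (simp add: smul_right_distrib [symmetric] algebra_simps)
  then show ?thesis by (simp add: smul_half_double)
qed

abbreviation D :: "'u \<Rightarrow> 'u" where "D x \<equiv> Dop U a c x"

definition Dop_cpow_sum :: "nat \<Rightarrow> 'u" where
  "Dop_cpow_sum m = lsum U (\<lambda>i. cpow i \<cdot> D (cpow (m - i))) [0..<m]"

lemma Dop_cpow_sum_eq: "Dop_cpow_sum m = a \<cdot> cpow (Suc m) \<ominus> cpow (Suc m) \<cdot> a"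
proof (induct m)
  case 0
  then show ?case by (simp add: Dop_cpow_sum_def cpow_Suc commute)
next
  case (Suc m)
  have "Dop_cpow_sum (Suc m) = D (cpow (Suc m)) \<oplus> c \<cdot> Dop_cpow_sum m"
    unfolding Dop_cpow_sum_def lsum_upt_Suc_shift by (simp add: cpow_Suc_mul lsum_mul_left)
  then show ?case
    unfolding Suc Dop_def
    by (simp add: mul_bilinear cpow_Suc_mul [symmetric] cpow_Suc [symmetric] algebra_simps)
qed

definition assoc_Dop_cpow_sum :: "'u \<Rightarrow> nat \<Rightarrow> 'u" where
  "assoc_Dop_cpow_sum b m = lsum U (\<lambda>i. assoc U (cpow i) (D (cpow (m - i))) b) [0..<m]"

lemma assoc_Dop_cpow_sum_Suc:
  "assoc_Dop_cpow_sum b (Suc m) = assoc U c (Dop_cpow_sum m) b \<oplus> c \<cdot> assoc_Dop_cpow_sum b m"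
proof -
  have "assoc_Dop_cpow_sum b (Suc m) = lsum U (\<lambda>i. assoc U (cpow (Suc i)) (D (cpow (m - i))) b) [0..<m]"
    unfolding assoc_Dop_cpow_sum_def lsum_upt_Suc_shift by (simp add: assoc_one_left)
  also have "\<dots> = assoc U c (Dop_cpow_sum m) b \<oplus> c \<cdot> assoc_Dop_cpow_sum b m"
    unfolding assoc_cpow_Suc lsum_add Dop_cpow_sum_def assoc_Dop_cpow_sum_def
    by (simp add: lsum_mul_left lsum_hom [where h = "\<lambda>z. assoc U c z b", OF assoc_add_mid assoc_zero_mid])
  finally show ?thesis .
qed

end

locale commuting_LN_alt_pair = commuting_element U c a for U :: "('k::field_char_0, 'u) alg" and c a +
  assumes a_LN_alt: "a \<in> LN_alt U"
begin

text \<open>Expand every product of a or c with a product by the LN_alt identity; what remains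
  cancels using a c = c a.\<close>
lemma Dop_mul: "D (x \<cdot> y) = D x \<cdot> y \<oplus> x \<cdot> D y"
proof -
  note expand_a = LN_alt_mul_mul [OF a_LN_alt] and expand_c = LN_alt_mul_mul [OF c_LN_alt]
  show ?thesis
    unfolding Dop_def
    apply (simp only: expand_c [of x y] expand_a [of x y] mul_bilinear
        expand_a [of "c \<cdot> x" y] expand_a [of "x \<cdot> c" y] expand_a [of x "c \<cdot> y"]
        expand_c [of "a \<cdot> x" y] expand_c [of "x \<cdot> a" y] expand_c [of x "a \<cdot> y"]
        expand_c [of x a] expand_a [of x c] commute)
    by (simp add: algebra_simps)
qed

lemma assoc_c_cpow_sym: "assoc U c (cpow k \<cdot> a \<oplus> a \<cdot> cpow k) b = cpow k \<cdot> D b"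
proof -
  let ?p = "cpow k" and ?q = "cpow (Suc k)"
  have sym_a: "(z \<cdot> a \<oplus> a \<cdot> z) \<cdot> b = a \<cdot> (z \<cdot> b) \<oplus> z \<cdot> (a \<cdot> b)" for z
    using LN_alt_mul_mul [OF a_LN_alt, of z b] by (simp add: mul_bilinear algebra_simps)
  have c_sym: "c \<cdot> (?p \<cdot> a \<oplus> a \<cdot> ?p) = (?q \<cdot> a \<oplus> a \<cdot> ?q) \<ominus> D ?p"
    by (simp add: Dop_def mul_bilinear cpow_Suc_mul [symmetric] cpow_Suc [symmetric] algebra_simps)
  have "assoc U c (?p \<cdot> a \<oplus> a \<cdot> ?p) b
      = (?q \<cdot> a \<oplus> a \<cdot> ?q) \<cdot> b \<ominus> D ?p \<cdot> b \<ominus> c \<cdot> ((?p \<cdot> a \<oplus> a \<cdot> ?p) \<cdot> b)"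
    unfolding assoc_def c_sym mul_diff_right ..
  also have "\<dots> = a \<cdot> (?q \<cdot> b) \<oplus> ?q \<cdot> (a \<cdot> b) \<ominus> D ?p \<cdot> b
      \<ominus> (c \<cdot> (a \<cdot> (?p \<cdot> b)) \<oplus> ?q \<cdot> (a \<cdot> b))"
    by (simp only: sym_a mul_distrib_left cpow_Suc_mul [symmetric])
  also have "\<dots> = D (?p \<cdot> b) \<ominus> D ?p \<cdot> b"
    by (simp add: Dop_def cpow_Suc_mul [symmetric] algebra_simps)
  finally show ?thesis
    by (simp add: Dop_mul algebra_simps)
qed

lemma assoc_cpow_double:
  "assoc U (cpow (Suc m)) a b \<oplus> assoc U (cpow (Suc m)) a b \<oplus> assoc_Dop_cpow_sum b m =
   smul U (of_nat (Suc m)) (cpow m \<cdot> D b)"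
proof (induct m)
  case 0
  have "assoc U c (a \<oplus> a) b = D b"
    using assoc_c_cpow_sym [of 0] by simp
  then show ?case
    by (simp add: assoc_Dop_cpow_sum_def assoc_add_mid cpow_Suc)
next
  case (Suc m)
  let ?A = "assoc U (cpow (Suc m)) a b"
  have "assoc U (cpow (Suc (Suc m))) a b \<oplus> assoc U (cpow (Suc (Suc m))) a b \<oplus> assoc_Dop_cpow_sum b (Suc m)
      = assoc U c (cpow (Suc m) \<cdot> a \<oplus> a \<cdot> cpow (Suc m)) b \<oplus> c \<cdot> (?A \<oplus> ?A \<oplus> assoc_Dop_cpow_sum b m)"
    unfolding assoc_cpow_Suc [of "Suc m"] assoc_Dop_cpow_sum_Suc Dop_cpow_sum_eq assoc_diff_mid assoc_add_mid
    by (simp add: mul_bilinear algebra_simps)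
  also have "\<dots> = cpow (Suc m) \<cdot> D b \<oplus> smul U (of_nat (Suc m)) (cpow (Suc m) \<cdot> D b)"
    unfolding Suc assoc_c_cpow_sym mul_smul_right cpow_Suc_mul [symmetric] ..
  also have "\<dots> = smul U (of_nat (Suc (Suc m))) (cpow (Suc m) \<cdot> D b)"
    by (simp only: smul_of_nat_Suc additive.add.commute)
  finally show ?case .
qed

lemma assoc_cpow:
  "assoc U (cpow (Suc m)) a b =
   smul U (of_nat (Suc m) / 2) (cpow m \<cdot> D b) \<ominus> smul U (1/2) (assoc_Dop_cpow_sum b m)"
proof -
  let ?A = "assoc U (cpow (Suc m)) a b"
  have "?A \<oplus> ?A = smul U (of_nat (Suc m)) (cpow m \<cdot> D b) \<ominus> assoc_Dop_cpow_sum b m"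
    using assoc_cpow_double [of m] by (simp add: algebra_simps)
  then have "?A = smul U (1/2) (smul U (of_nat (Suc m)) (cpow m \<cdot> D b) \<ominus> assoc_Dop_cpow_sum b m)"
    using smul_half_double [of ?A] by simp
  then show ?thesis
    by (simp add: smul_diff_right smul_smul)
qed

end

theorem mainTheorem2:
  fixes T :: "('k::field_char_0, 't) lts" and U :: "('k, 'u) alg" and \<iota> :: "'t \<Rightarrow> 'u"
  assumes "lts_axioms T" and "is_UEA T U \<iota>"
  shows "(\<forall>n a b c. n \<ge> 1 \<longrightarrow>
            assoc U (apow U (\<iota> c) n) (\<iota> a) (\<iota> b) =
            sub U (smul U (of_nat n / 2) (mul U (apow U (\<iota> c) (n - 1)) (\<iota> (trip T a c b))))
                  (smul U (1 / 2) (lsum U (\<lambda>i. assoc U (apow U (\<iota> c) i)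
                                              (Dop U (\<iota> a) (\<iota> c) (apow U (\<iota> c) (n - 1 - i))) (\<iota> b))
                                   [0..<n - 1])))
       \<and> (\<forall>n a c. n \<ge> 1 \<longrightarrow>
            mul U (apow U (\<iota> c) n) (\<iota> a) =
            add U (smul U (1 / 2) (add U (mul U (\<iota> a) (apow U (\<iota> c) n)) (mul U (apow U (\<iota> c) n) (\<iota> a))))
                  (lsum U (\<lambda>i. mul U (apow U (\<iota> c) i) (assoc U (\<iota> a) (\<iota> c) (apow U (\<iota> c) (n - 1 - i))))
                   [0..<n - 1]))"
proof -
  \<comment> \<open>Only that \<iota> maps T linearly onto pairwise commuting elements of LN_alt(U) respecting
    the triple product is used.\<close>
  from assms(2) have "unital_algebra U" and hom: "lts_hom_LN T U \<iota>" and comm: "commuting_image U \<iota>"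
    unfolding is_UEA_def by auto
  then have elem: "commuting_element U (\<iota> c) (\<iota> a)"
    and pair: "commuting_LN_alt_pair U (\<iota> c) (\<iota> a)" for a c
    by (simp_all add: commuting_LN_alt_pair_def commuting_LN_alt_pair_axioms_def commuting_element_def
        commuting_element_axioms_def LN_alt_element_def LN_alt_element_axioms_def unital_alg_def
        lts_hom_LN_def commuting_image_def)
  have trip: "\<iota> (trip T a c b) = Dop U (\<iota> a) (\<iota> c) (\<iota> b)" for a b c
    using hom comm unital_alg.alt_trip_commuting [OF \<open>unital_algebra U\<close> [folded unital_alg_def]]
    unfolding lts_hom_LN_def commuting_image_def by simp
  show ?thesis
    using commuting_LN_alt_pair.assoc_cpow [OF pair] commuting_element.cpow_mul_symmetrized [OF elem]
    by (auto simp: trip commuting_element.assoc_Dop_cpow_sum_def [OF elem]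
        commuting_element.assoc_cpow_sum_def [OF elem] dest!: Suc_le_D)
qed

end
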